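(* For real $m>0$ and $\epsilon$ with $m+2\epsilon>2$ and $\epsilon<2$, and $d=4+m/2-\epsilon$, define $$\Phi_{m,d}(v)=\frac{1}{2^{2+m}\pi^{(6+m-2\epsilon)/4}}\Bigg[\frac{\Gamma(1-\epsilon/2)}{\Gamma[(m+2)/4]}\,{}_1F_2\Big(1-\tfrac{\epsilon}{2};\tfrac12,\tfrac{m+2}{4};\tfrac{v^4}{64}\Big)-\frac{v^2\,\Gamma[(3-\epsilon)/2]}{4\,\Gamma(1+m/4)}\,{}_1F_2\Big(\tfrac{3-\epsilon}{2};\tfrac32,1+\tfrac{m}{4};\tfrac{v^4}{64}\Big)\Bigg].$$ Then for all real $v$, $$\Phi_{m,4+m/2-\epsilon}(v)=\frac{2^{-m-1}\pi^{(2\epsilon-6-m)/4}}{\Gamma[(m-2+2\epsilon)/4]}\int_0^1 dt\,t^{1-\epsilon}(1-t^2)^{(m-6+2\epsilon)/4}\,e^{-tv^2/4}.$$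
   Context: ${}_1F_2$ denotes the generalized hypergeometric function. $\Phi_{m,d}$ is the scaling function of the free Lifshitz-point propagator: the inverse Fourier transform of $(p^2+k^4)^{-1}$, $(\bm k,\bm p)\in\mathbb{R}^m\times\mathbb{R}^{d-m}$, equals $r^{-2+\epsilon}\Phi_{m,d}(z r^{-1/2})$ with $z=|\bm z|$, $r=|\bm r|$. *)

theory Defs
  imports "HOL-Analysis.Analysis"
begin

text \<open>Generalized hypergeometric function 1F2(a; b1, b2; x), defined by its power series
  (entire in x for parameters b1, b2 not in {0,-1,-2,...}).\<close>
definition hyp1F2 :: "real \<Rightarrow> real \<Rightarrow> real \<Rightarrow> real \<Rightarrow> real" where
  "hyp1F2 a b1 b2 x =
     (\<Sum>n. pochhammer a n / (pochhammer b1 n * pochhammer b2 n) * x ^ n / fact n)"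

definition Phi :: "real \<Rightarrow> real \<Rightarrow> real \<Rightarrow> real" where
  "Phi m eps v =
     1 / (2 powr (2 + m) * pi powr ((6 + m - 2 * eps) / 4)) *
     ( Gamma (1 - eps / 2) / Gamma ((m + 2) / 4) *
         hyp1F2 (1 - eps / 2) (1 / 2) ((m + 2) / 4) (v ^ 4 / 64)
     - v ^ 2 * Gamma ((3 - eps) / 2) / (4 * Gamma (1 + m / 4)) *
         hyp1F2 ((3 - eps) / 2) (3 / 2) (1 + m / 4) (v ^ 4 / 64))"

end

theory Submission
  imports Defs
begin

(* For c > -1 and y > 0 the function t powr c * (1 - t^2) powr (y - 1) is integrable on (0,1)
   with integral Beta ((c + 1) / 2) y / 2 (substitute s = t^2 in the Beta integral).  Expanding
   exp (t * w) in its power series and integrating termwise (dominated convergence, the bound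
   being a Beta value times the exponential series of |w|) gives
     LBINT t:(0,1). t powr c * (1 - t^2) powr (y - 1) * exp (t * w)
       = (SUM k. w^k / k! * Beta ((c + k + 1) / 2) y / 2).
   Splitting this absolutely convergent series into even and odd k, and rewriting Beta values
   with shifted first argument and the factorials of 2n and 2n+1 through Pochhammer symbols,
   the two halves become Beta-multiples of 1F2 series in w^2/4 (set_integral_exp_hyp1F2).
   The theorem is the case c = 1 - eps, y = (m - 2 + 2 eps) / 4, w = - v^2/4, where the
   Beta prefactors combine with the normalisation constant into those of Phi. *)

lemma Beta_real_pos: "a > 0 \<Longrightarrow> b > 0 \<Longrightarrow> Beta a b > (0::real)"
  by (simp add: Beta_def Gamma_real_pos)

(* Pointwise form of the substitution s = t^2 in the Beta integrand. *)
lemma powr_square_mult_derivative: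
  fixes t p :: real
  assumes "t > 0"
  shows "(t^2) powr ((p + 1) / 2 - 1) * (2 * t) = 2 * t powr p"
proof -
  have "t^2 = t powr 2" using assms by (simp add: powr_realpow)
  moreover have "2 * ((p + 1) / 2 - 1) = p - 1" by simp
  ultimately have "(t^2) powr ((p + 1) / 2 - 1) = t powr (p - 1)" by (simp only: powr_powr)
  thus ?thesis using assms by (simp add: powr_diff)
qed

lemma nn_integral_power_one_minus_square:
  fixes p y :: real
  assumes p: "p > -1" and y: "y > 0"
  shows "(\<integral>\<^sup>+t. ennreal (indicator {0<..<1} t * (t powr p * (1 - t^2) powr (y - 1))) \<partial>lborel)
           = ennreal (Beta ((p + 1) / 2) y / 2)"
proof -
  define a where "a = (p + 1) / 2"
  have a: "a > 0" using p by (simp add: a_def)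
  define f where "f s = s powr (a - 1) * (1 - s) powr (y - 1)" for s :: real
  define g where "g t = indicator {0<..<1} t * (t powr p * (1 - t^2) powr (y - 1))" for t :: real
  have "ennreal (Beta a y) = (\<integral>\<^sup>+s. ennreal (f s * indicator {0..1} s) \<partial>lborel)"
    using nn_integral_has_integral_lebesgue[OF _ has_integral_Beta_real[OF a y]]
    by (simp add: f_def mult.commute)
  also have "\<dots> = (\<integral>\<^sup>+t. ennreal (f (t^2) * (2 * t) * indicator {0..1} t) \<partial>lborel)"
  proof -
    have "set_borel_measurable borel {(0::real)^2..1^2} f"
      unfolding f_def set_borel_measurable_def by measurable
    moreover have "((\<lambda>t. t^2) has_real_derivative 2 * x) (at x)" for x :: real
      by (auto intro!: derivative_eq_intros)
    moreover have "continuous_on {0..1} (\<lambda>t::real. 2 * t)" by (intro continuous_intros)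
    ultimately show ?thesis
      using nn_integral_substitution[where g = "\<lambda>t. t^2" and g' = "\<lambda>t. 2 * t" and a = 0 and b = 1]
      by simp
  qed
  also have "\<dots> = (\<integral>\<^sup>+t. ennreal 2 * ennreal (g t) \<partial>lborel)"
    (* the two integrands agree off the null set {0, 1} *)
  proof (intro nn_integral_cong_AE)
    have integrand: "f (t^2) * (2 * t) * indicator {0..1} t = 2 * g t" if "t \<noteq> 0" "t \<noteq> 1" for t
      using that powr_square_mult_derivative[of t p]
      by (cases "0 < t \<and> t < 1") (auto simp: f_def g_def a_def indicator_def algebra_simps)
    have split: "ennreal (2 * g t) = ennreal 2 * ennreal (g t)" for t
      by (rule ennreal_mult) (simp_all add: g_def)
    show "AE t in lborel. ennreal (f (t^2) * (2 * t) * indicator {0..1} t) = ennreal 2 * ennreal (g t)"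
      using AE_lborel_singleton[of 0] AE_lborel_singleton[of 1]
      by eventually_elim (metis integrand split)
  qed
  also have "\<dots> = ennreal 2 * (\<integral>\<^sup>+t. ennreal (g t) \<partial>lborel)"
    by (rule nn_integral_cmult) (simp add: g_def)
  finally have "ennreal 2 * ennreal (Beta a y / 2) = ennreal 2 * (\<integral>\<^sup>+t. ennreal (g t) \<partial>lborel)"
    using ennreal_mult[of 2 "Beta a y / 2"] Beta_real_pos[OF a y] by simp
  thus ?thesis by (simp add: ennreal_mult_cancel_left g_def a_def)
qed

lemma set_integral_power_one_minus_square:
  fixes p y :: real
  assumes p: "p > -1" and y: "y > 0"
  shows "set_integrable lborel {0<..<1} (\<lambda>t. t powr p * (1 - t^2) powr (y - 1))"
    and "(LBINT t:{0<..<1}. t powr p * (1 - t^2) powr (y - 1)) = Beta ((p + 1) / 2) y / 2"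
proof -
  have "integrable lborel (\<lambda>t. indicator {0<..<1} t * (t powr p * (1 - t^2) powr (y - 1))) \<and>
         (\<integral>t. indicator {0<..<1} t * (t powr p * (1 - t^2) powr (y - 1)) \<partial>lborel) = Beta ((p + 1) / 2) y / 2"
  proof (rule nn_integral_eq_integrable[THEN iffD1])
    show "(\<lambda>t. indicator {0<..<1} t * (t powr p * (1 - t^2) powr (y - 1))) \<in> borel_measurable lborel"
      by measurable
    show "0 \<le> Beta ((p + 1) / 2) y / 2" using Beta_real_pos[of "(p + 1) / 2" y] p y by simp
  qed (use nn_integral_power_one_minus_square[OF p y] in auto)
  thus "set_integrable lborel {0<..<1} (\<lambda>t. t powr p * (1 - t^2) powr (y - 1))"
    and "(LBINT t:{0<..<1}. t powr p * (1 - t^2) powr (y - 1)) = Beta ((p + 1) / 2) y / 2"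
    by (simp_all add: set_integrable_def set_lebesgue_integral_def)
qed

(* Since Beta is decreasing in its first argument, the Beta moments are dominated by the
   exponential series; this is the bound for termwise integration below. *)
lemma summable_exp_Beta:
  fixes c y w :: real
  assumes c: "c > -1" and y: "y > 0" and w: "w \<ge> 0"
  shows "summable (\<lambda>k. w^k / fact k * Beta ((c + real k + 1) / 2) y)"
proof (rule summable_comparison_test)
  show "summable (\<lambda>k. Beta ((c + 1) / 2) y * (w^k / fact k))"
    using summable_exp[of w] by (intro summable_mult) (simp add: divide_inverse mult.commute)
  have "norm (w^k / fact k * Beta ((c + real k + 1) / 2) y) \<le> Beta ((c + 1) / 2) y * (w^k / fact k)"
    for k
  proof -
    have "0 \<le> Beta ((c + real k + 1) / 2) y" using c y by (simp add: Beta_real_pos less_imp_le)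
    moreover have "Beta ((c + real k + 1) / 2) y \<le> Beta ((c + 1) / 2) y"
      by (rule Beta_real_mono) (use c y in auto)
    ultimately have "w^k / fact k * Beta ((c + real k + 1) / 2) y \<le> w^k / fact k * Beta ((c + 1) / 2) y"
      using w by (intro mult_left_mono) auto
    thus ?thesis using w \<open>0 \<le> Beta ((c + real k + 1) / 2) y\<close> by (simp add: mult.commute)
  qed
  thus "\<exists>N. \<forall>k\<ge>N. norm (w^k / fact k * Beta ((c + real k + 1) / 2) y)
          \<le> Beta ((c + 1) / 2) y * (w^k / fact k)" by blast
qed

lemma exp_moment_integrand_sums:
  fixes c y w t :: real
  shows "(\<lambda>k. w^k / fact k * (indicator {0<..<1} t * (t powr (c + real k) * (1 - t^2) powr (y - 1))))
           sums (indicator {0<..<1} t * (t powr c * (1 - t^2) powr (y - 1) * exp (t * w)))"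
    and "summable (\<lambda>k. norm (w^k / fact k * (indicator {0<..<1} t * (t powr (c + real k) * (1 - t^2) powr (y - 1)))))"
proof -
  define H where "H = indicator {0<..<1} t * (t powr c * (1 - t^2) powr (y - 1))"
  have expand: "w^k / fact k * (indicator {0<..<1} t * (t powr (c + real k) * (1 - t^2) powr (y - 1)))
                = H * (inverse (fact k) * (t * w)^k)" for k
    by (cases "0 < t \<and> t < 1") (simp_all add: H_def powr_add powr_realpow power_mult_distrib field_simps)
  show "(\<lambda>k. w^k / fact k * (indicator {0<..<1} t * (t powr (c + real k) * (1 - t^2) powr (y - 1))))
           sums (indicator {0<..<1} t * (t powr c * (1 - t^2) powr (y - 1) * exp (t * w)))"
    unfolding expand using sums_mult[OF exp_converges[of "t * w"], of H]
    by (simp add: H_def divide_inverse mult_ac)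
  have "norm (H * (inverse (fact k) * (t * w)^k)) = \<bar>H\<bar> * (inverse (fact k) * \<bar>t * w\<bar>^k)" for k
    by (simp add: abs_mult power_abs)
  thus "summable (\<lambda>k. norm (w^k / fact k * (indicator {0<..<1} t * (t powr (c + real k) * (1 - t^2) powr (y - 1)))))"
    unfolding expand by (simp only:) (rule summable_mult[OF summable_exp])
qed

lemma exp_Beta_series:
  fixes c y w :: real
  assumes c: "c > -1" and y: "y > 0"
  shows "(\<lambda>k. w^k / fact k * (Beta ((c + real k + 1) / 2) y / 2)) sums
           (LBINT t:{0<..<1}. t powr c * (1 - t^2) powr (y - 1) * exp (t * w))"
proof -
  define M where "M k t = indicator {0<..<1} t * (t powr (c + real k) * (1 - t^2) powr (y - 1))"
    for k :: nat and t :: real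
  have p: "c + real k > -1" for k using c by simp
  have M_integrable: "integrable lborel (M k)" for k
    using set_integral_power_one_minus_square(1)[OF p y] by (simp add: M_def[abs_def] set_integrable_def)
  have M_integral: "integral\<^sup>L lborel (M k) = Beta ((c + real k + 1) / 2) y / 2" for k
    using set_integral_power_one_minus_square(2)[OF p y]
    by (simp add: M_def[abs_def] set_lebesgue_integral_def)
  have "(\<lambda>k. \<integral>t. w^k / fact k * M k t \<partial>lborel) sums (\<integral>t. (\<Sum>k. w^k / fact k * M k t) \<partial>lborel)"
  proof (rule sums_integral)
    show "integrable lborel (\<lambda>t. w^k / fact k * M k t)" for k using M_integrable by simp
    show "AE t in lborel. summable (\<lambda>k. norm (w^k / fact k * M k t))"
      using exp_moment_integrand_sums(2) by (simp add: M_def)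
    have "(\<lambda>t. norm (w^k / fact k * M k t)) = (\<lambda>t. \<bar>w\<bar>^k / fact k * M k t)" for k
      by (simp add: M_def abs_mult power_abs)
    hence "(\<integral>t. norm (w^k / fact k * M k t) \<partial>lborel) = \<bar>w\<bar>^k / fact k * Beta ((c + real k + 1) / 2) y * (1 / 2)"
      for k by (simp only: integral_mult_right_zero M_integral)
    thus "summable (\<lambda>k. \<integral>t. norm (w^k / fact k * M k t) \<partial>lborel)"
      by (simp only:) (rule summable_mult2[OF summable_exp_Beta[OF c y abs_ge_zero]])
  qed
  moreover have "(\<lambda>t. \<Sum>k. w^k / fact k * M k t)
      = (\<lambda>t. indicator {0<..<1} t * (t powr c * (1 - t^2) powr (y - 1) * exp (t * w)))"
    using exp_moment_integrand_sums(1) by (simp add: M_def sums_iff)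
  ultimately show ?thesis
    by (simp only: integral_mult_right_zero M_integral set_lebesgue_integral_def real_scaleR_def mult.assoc)
qed

lemma suminf_even_odd:
  fixes a :: "nat \<Rightarrow> 'a::banach"
  assumes "summable (\<lambda>n. norm (a n))"
  shows "summable (\<lambda>n. a (2 * n))" and "summable (\<lambda>n. a (2 * n + 1))"
    and "suminf a = (\<Sum>n. a (2 * n)) + (\<Sum>n. a (2 * n + 1))"
proof -
  define ev where "ev n = (if even n then a n else 0)" for n
  define od where "od n = (if odd n then a n else 0)" for n
  have "summable ev" "summable od"
    by (rule summable_comparison_test[OF _ assms], simp add: ev_def od_def)+
  moreover have "strict_mono (\<lambda>n::nat. 2 * n)" "strict_mono (\<lambda>n::nat. 2 * n + 1)"
    by (simp_all add: strict_mono_def)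
  ultimately have "(\<lambda>n. ev (2 * n)) sums suminf ev" "(\<lambda>n. od (2 * n + 1)) sums suminf od"
    by (subst sums_mono_reindex; auto simp: ev_def od_def elim!: evenE oddE)+
  hence sums: "(\<lambda>n. a (2 * n)) sums suminf ev" "(\<lambda>n. a (2 * n + 1)) sums suminf od"
    by (simp_all add: ev_def od_def)
  thus "summable (\<lambda>n. a (2 * n))" "summable (\<lambda>n. a (2 * n + 1))"
    by (simp_all add: sums_iff)
  have "a = (\<lambda>n. ev n + od n)" by (auto simp: ev_def od_def)
  thus "suminf a = (\<Sum>n. a (2 * n)) + (\<Sum>n. a (2 * n + 1))"
    using suminf_add[OF \<open>summable ev\<close> \<open>summable od\<close>] sums by (simp add: sums_iff)
qed

lemma sums_cmult_suminf:
  fixes f :: "nat \<Rightarrow> 'a::real_normed_field"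
  assumes "(\<lambda>n. C * f n) sums S"
  shows "S = C * suminf f"
proof (cases "C = 0")
  case True
  hence "(\<lambda>n. C * f n) sums 0" by simp
  with assms have "S = 0" by (rule sums_unique2)
  thus ?thesis using True by simp
next
  case False
  hence "f sums (S / C)" using assms sums_mult_iff[OF False, of f "S / C"] by simp
  thus ?thesis using False by (simp add: sums_iff)
qed

lemma Beta_plus_of_nat:
  fixes a y :: real
  assumes "a > 0" and "y > 0"
  shows "Beta (a + real n) y = Beta a y * (pochhammer a n / pochhammer (a + y) n)"
proof -
  have "a \<notin> \<int>\<^sub>\<le>\<^sub>0" "a + y \<notin> \<int>\<^sub>\<le>\<^sub>0" using assms by (auto dest: nonpos_Ints_nonpos)
  moreover have "Gamma a > 0" "Gamma (a + y) > 0" using assms by (simp_all add: Gamma_real_pos)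
  ultimately have "Gamma (a + real n) = pochhammer a n * Gamma a"
    and "Gamma (a + y + real n) = pochhammer (a + y) n * Gamma (a + y)"
    by (simp_all add: pochhammer_Gamma)
  thus ?thesis unfolding Beta_def by (simp add: add_ac mult_ac)
qed

(* The even and odd terms of an exponential series in Pochhammer form, via
   (2n)! = 4^n (1/2)_n n!  and  (2n+1)! = 4^n (3/2)_n n!. *)
lemma even_power_div_fact:
  fixes x :: "'a::field_char_0"
  shows "x ^ (2 * n) / fact (2 * n) = (x^2 / 4) ^ n / (pochhammer (1 / 2) n * fact n)"
proof -
  have "x ^ (2 * n) = (x^2) ^ n" and "(2::'a) ^ (2 * n) = 4 ^ n"
    by (simp_all add: power_mult)
  thus ?thesis by (simp add: fact_double power_divide)
qed

lemma odd_power_div_fact: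
  fixes x :: "'a::field_char_0"
  shows "x ^ (2 * n + 1) / fact (2 * n + 1) = x * (x^2 / 4) ^ n / (pochhammer (3 / 2) n * fact n)"
proof -
  have "pochhammer (1 / 2 :: 'a) (Suc n) = 1 / 2 * pochhammer (3 / 2) n"
    by (simp add: pochhammer_rec)
  moreover have "pochhammer (1 / 2 :: 'a) (Suc n) = pochhammer (1 / 2) n * (1 / 2 + of_nat n)"
    by (simp add: pochhammer_rec')
  ultimately have "pochhammer (3 / 2 :: 'a) n = 2 * (pochhammer (1 / 2) n * (1 / 2 + of_nat n))"
    by (simp add: mult_ac)
  hence "pochhammer (3 / 2 :: 'a) n = (2 * of_nat n + 1) * pochhammer (1 / 2) n"
    by (simp add: algebra_simps)
  moreover have "fact (2 * n) = (4 ^ n * pochhammer (1 / 2) n * fact n :: 'a)"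
    using fact_double[of n, where 'a='a] by (simp add: power_mult)
  ultimately have fact_odd: "fact (2 * n + 1) = (4 ^ n * (pochhammer (3 / 2) n * fact n) :: 'a)"
    by (simp add: algebra_simps)
  have power_odd: "x ^ (2 * n + 1) = x * (x^2) ^ n" by (simp add: power_mult)
  show ?thesis unfolding fact_odd power_odd power_divide by simp
qed

lemma exp_Beta_coefficient_even:
  fixes \<alpha> y w :: real
  assumes \<alpha>: "\<alpha> > 0" and y: "y > 0"
  shows "w ^ (2 * n) / fact (2 * n) * (Beta (\<alpha> + real n) y / 2)
           = Beta \<alpha> y / 2 * (pochhammer \<alpha> n / (pochhammer (1 / 2) n * pochhammer (\<alpha> + y) n)
               * (w^2 / 4) ^ n / fact n)"
proof -
  have "pochhammer (1 / 2) n > (0::real)" "pochhammer (\<alpha> + y) n > 0"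
    using \<alpha> y by (simp_all add: pochhammer_pos)
  thus ?thesis
    unfolding even_power_div_fact Beta_plus_of_nat[OF \<alpha> y] by (simp add: field_simps)
qed

lemma exp_Beta_coefficient_odd:
  fixes \<beta> y w :: real
  assumes \<beta>: "\<beta> > 0" and y: "y > 0"
  shows "w ^ (2 * n + 1) / fact (2 * n + 1) * (Beta (\<beta> + real n) y / 2)
           = w * Beta \<beta> y / 2 * (pochhammer \<beta> n / (pochhammer (3 / 2) n * pochhammer (\<beta> + y) n)
               * (w^2 / 4) ^ n / fact n)"
proof -
  have "pochhammer (3 / 2) n > (0::real)" "pochhammer (\<beta> + y) n > 0"
    using \<beta> y by (simp_all add: pochhammer_pos)
  thus ?thesis
    unfolding odd_power_div_fact Beta_plus_of_nat[OF \<beta> y] by (simp add: field_simps)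
qed

theorem set_integral_exp_hyp1F2:
  fixes c y w :: real
  assumes c: "c > -1" and y: "y > 0"
  shows "(LBINT t:{0<..<1}. t powr c * (1 - t^2) powr (y - 1) * exp (t * w)) =
    (Beta ((c + 1) / 2) y * hyp1F2 ((c + 1) / 2) (1 / 2) ((c + 1) / 2 + y) (w^2 / 4)
     + w * Beta ((c + 2) / 2) y * hyp1F2 ((c + 2) / 2) (3 / 2) ((c + 2) / 2 + y) (w^2 / 4)) / 2"
proof -
  define a where "a k = w^k / fact k * (Beta ((c + real k + 1) / 2) y / 2)" for k
  define T where "T \<alpha> b n = pochhammer \<alpha> n / (pochhammer b n * pochhammer (\<alpha> + y) n) * (w^2 / 4)^n / fact n"
    for \<alpha> b :: real and n :: nat
  have hyp1F2_T: "hyp1F2 \<alpha> b (\<alpha> + y) (w^2 / 4) = suminf (T \<alpha> b)" for \<alpha> b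
    by (simp add: hyp1F2_def T_def[abs_def])
  have a_sums: "a sums (LBINT t:{0<..<1}. t powr c * (1 - t^2) powr (y - 1) * exp (t * w))"
    unfolding a_def[abs_def] by (rule exp_Beta_series[OF c y])
  have "norm (a k) = \<bar>w\<bar>^k / fact k * Beta ((c + real k + 1) / 2) y * (1 / 2)" for k
    using Beta_real_pos[of "(c + real k + 1) / 2" y] c y by (simp add: a_def abs_mult power_abs)
  hence a_abs: "summable (\<lambda>k. norm (a k))"
    by (simp only:) (rule summable_mult2[OF summable_exp_Beta[OF c y abs_ge_zero]])
  have "(c + real (2 * n) + 1) / 2 = (c + 1) / 2 + real n" for n by simp
  hence even: "a (2 * n) = Beta ((c + 1) / 2) y / 2 * T ((c + 1) / 2) (1 / 2) n" for n
    using exp_Beta_coefficient_even[of "(c + 1) / 2" y w n] c y by (simp only: a_def T_def) simp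
  have "(c + real (2 * n + 1) + 1) / 2 = (c + 2) / 2 + real n" for n by simp
  hence odd: "a (2 * n + 1) = w * Beta ((c + 2) / 2) y / 2 * T ((c + 2) / 2) (3 / 2) n" for n
    using exp_Beta_coefficient_odd[of "(c + 2) / 2" y w n] c y by (simp only: a_def T_def) simp
  note split = suminf_even_odd[OF a_abs]
  have "(\<Sum>n. a (2 * n)) = Beta ((c + 1) / 2) y / 2 * suminf (T ((c + 1) / 2) (1 / 2))"
    using summable_sums[OF split(1)] unfolding even by (rule sums_cmult_suminf)
  moreover have "(\<Sum>n. a (2 * n + 1)) = w * Beta ((c + 2) / 2) y / 2 * suminf (T ((c + 2) / 2) (3 / 2))"
    using summable_sums[OF split(2)] unfolding odd by (rule sums_cmult_suminf)
  ultimately show ?thesis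
    using split(3) sums_unique[OF a_sums] by (simp add: hyp1F2_T add_divide_distrib)
qed

lemma prefactor_eq:
  fixes m eps :: real
  shows "2 powr (- m - 1) * pi powr ((2 * eps - 6 - m) / 4)
           = 2 / (2 powr (2 + m) * pi powr ((6 + m - 2 * eps) / 4))"
proof -
  have "2 powr (2 + m) = 2 powr (1 + (m + 1))" by (simp add: add_ac)
  hence "2 powr (2 + m) = 2 * 2 powr (m + 1)" by (simp add: powr_add)
  moreover have "2 powr (- m - 1) = inverse (2 powr (m + 1))"
    by (simp add: powr_minus[symmetric])
  moreover have "(2 * eps - 6 - m) / 4 = - ((6 + m - 2 * eps) / 4)" by (simp add: field_simps)
  hence "pi powr ((2 * eps - 6 - m) / 4) = inverse (pi powr ((6 + m - 2 * eps) / 4))"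
    by (simp only: powr_minus)
  ultimately show ?thesis by (simp add: field_simps)
qed

theorem mainTheorem7:
  fixes m eps v :: real
  assumes "m > 0" and "m + 2 * eps > 2" and "eps < 2"
  shows "Phi m eps v =
    2 powr (- m - 1) * pi powr ((2 * eps - 6 - m) / 4) / Gamma ((m - 2 + 2 * eps) / 4) *
    (LBINT t=0..1. t powr (1 - eps) * (1 - t ^ 2) powr ((m - 6 + 2 * eps) / 4) * exp (- t * v ^ 2 / 4))"
proof -
  define c where "c = 1 - eps"
  define y where "y = (m - 2 + 2 * eps) / 4"
  define w where "w = - (v^2 / 4)"
  have c: "c > -1" and y: "y > 0" using assms by (simp_all add: c_def y_def)
  have "(\<lambda>t. t powr (1 - eps) * (1 - t ^ 2) powr ((m - 6 + 2 * eps) / 4) * exp (- t * v ^ 2 / 4))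
      = (\<lambda>t. t powr c * (1 - t^2) powr (y - 1) * exp (t * w))"
    by (simp add: c_def y_def w_def field_simps)
  hence integral: "(LBINT t=0..1. t powr (1 - eps) * (1 - t ^ 2) powr ((m - 6 + 2 * eps) / 4) * exp (- t * v ^ 2 / 4))
      = (LBINT t:{0<..<1}. t powr c * (1 - t^2) powr (y - 1) * exp (t * w))"
    using interval_integral_Ioo[of 0 1] by simp
  have params: "(c + 1) / 2 = 1 - eps / 2" "1 - eps / 2 + y = (m + 2) / 4"
    "(c + 2) / 2 = (3 - eps) / 2" "(3 - eps) / 2 + y = 1 + m / 4" "w^2 / 4 = v^4 / 64"
    by (simp_all add: c_def y_def w_def field_simps power2_eq_square power4_eq_xxxx)
  define A where "A = 1 / (2 powr (2 + m) * pi powr ((6 + m - 2 * eps) / 4))"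
  define F1 where "F1 = hyp1F2 (1 - eps / 2) (1 / 2) ((m + 2) / 4) (v ^ 4 / 64)"
  define F2 where "F2 = hyp1F2 ((3 - eps) / 2) (3 / 2) (1 + m / 4) (v ^ 4 / 64)"
  have Phi: "Phi m eps v = A * (Gamma (1 - eps / 2) / Gamma ((m + 2) / 4) * F1
      - v ^ 2 * Gamma ((3 - eps) / 2) / (4 * Gamma (1 + m / 4)) * F2)"
    unfolding Phi_def A_def F1_def F2_def ..
  have representation: "(LBINT t:{0<..<1}. t powr c * (1 - t^2) powr (y - 1) * exp (t * w))
      = (Beta (1 - eps / 2) y * F1 + w * Beta ((3 - eps) / 2) y * F2) / 2"
    using set_integral_exp_hyp1F2[OF c y, of w] unfolding params F1_def F2_def .
  have prefactor: "2 powr (- m - 1) * pi powr ((2 * eps - 6 - m) / 4) = 2 * A"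
    unfolding prefactor_eq A_def by simp
  have "Gamma y > 0" "Gamma ((m + 2) / 4) > 0" "Gamma (1 + m / 4) > 0"
    using y assms(1) by (simp_all add: Gamma_real_pos)
  thus ?thesis
    unfolding Phi integral representation prefactor y_def[symmetric] Beta_def params
    by (simp add: w_def field_simps)
qed

end
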